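(* Let $\lambda\in\mathbb{R}$, let $n$ be a positive integer and let $k$ be a positive integer. Then \[ S_{k,\lambda}(n)=\frac{(n)_{k+1,\lambda}}{k+1}+\frac{1}{k+1}\sum_{r=0}^{k-1}\binom{k+1}{r}(-1)^{k+1-r}\langle 1\rangle_{k+1-r,\lambda}\,S_{r,\lambda}(n). \]
   Context: For $\lambda\in\mathbb{R}$ the degenerate falling factorials are $(x)_{0,\lambda}=1$ and $(x)_{m,\lambda}=x(x-\lambda)\cdots(x-(m-1)\lambda)$ for $m\ge 1$, and the degenerate rising factorials are $\langle x\rangle_{0,\lambda}=1$ and $\langle x\rangle_{m,\lambda}=x(x+\lambda)(x+2\lambda)\cdots(x+(m-1)\lambda)$ for $m\ge1$. For a nonnegative integer $r$ and positive integer $n$, $S_{r,\lambda}(n)=\sum_{j=1}^{n}(j)_{r,\lambda}$ (so in particular $S_{0,\lambda}(n)=n$). *)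

theory Defs
  imports Complex_Main
begin

definition dfall :: "real \<Rightarrow> nat \<Rightarrow> real \<Rightarrow> real" where
  "dfall lam m x = (\<Prod>i<m. x - real i * lam)"

definition drise :: "real \<Rightarrow> nat \<Rightarrow> real \<Rightarrow> real" where
  "drise lam m x = (\<Prod>i<m. x + real i * lam)"

definition Sdeg :: "real \<Rightarrow> nat \<Rightarrow> nat \<Rightarrow> real" where
  "Sdeg lam r n = (\<Sum>j=1..n. dfall lam r (real j))"

end

theory Submission imports Defs begin

text \<open>The degenerate falling factorials satisfy the binomial theorem
  \<open>(x + y)\<^sub>m = \<Sum>\<^sub>r (m choose r) (x)\<^sub>r (y)\<^sub>m\<^sub>-\<^sub>r\<close>. Taking \<open>y = -1\<close> and using
  \<open>(-1)\<^sub>m = (-1)\<^sup>m \<langle>1\<rangle>\<^sub>m\<close>, the two top terms of the expansion of \<open>(x - 1)\<^sub>k\<^sub>+\<^sub>1\<close> are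
  \<open>(x)\<^sub>k\<^sub>+\<^sub>1 - (k + 1) (x)\<^sub>k\<close>; this expresses \<open>(k + 1) (x)\<^sub>k\<close> as the backward difference
  of \<open>(x)\<^sub>k\<^sub>+\<^sub>1\<close> plus lower falling factorials, and summing over \<open>x = 1, \<dots>, n\<close>
  telescopes.\<close>

lemma dfall_0 [simp]: "dfall l 0 x = 1"
  by (simp add: dfall_def)

lemma dfall_Suc: "dfall l (Suc m) x = dfall l m x * (x - real m * l)"
  by (simp add: dfall_def)

lemma dfall_at_0: "m \<ge> 1 \<Longrightarrow> dfall l m 0 = 0"
  unfolding dfall_def by (rule prod_zero) auto

lemma dfall_at_neg_1: "dfall l m (-1) = (-1) ^ m * drise l m 1"
  by (induction m) (simp_all add: dfall_def drise_def algebra_simps)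

lemma drise_0 [simp]: "drise l 0 x = 1"
  by (simp add: drise_def)

lemma drise_Suc_0 [simp]: "drise l (Suc 0) x = x"
  by (simp add: drise_def)

lemma sum_binomial_Suc_split:
  fixes f :: "nat \<Rightarrow> nat \<Rightarrow> 'a::comm_semiring_1"
  shows "(\<Sum>r\<le>Suc m. of_nat (Suc m choose r) * f r (Suc m - r))
       = (\<Sum>r\<le>m. of_nat (m choose r) * f (Suc r) (m - r))
       + (\<Sum>r\<le>m. of_nat (m choose r) * f r (Suc m - r))"
proof -
  have "(\<Sum>r\<le>m. of_nat (m choose r) * f r (Suc m - r))
      = (\<Sum>r\<le>Suc m. of_nat (m choose r) * f r (Suc m - r))"
    by (simp add: binomial_eq_0)
  also have "\<dots> = f 0 (Suc m) + (\<Sum>r\<le>m. of_nat (m choose Suc r) * f (Suc r) (m - r))"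
    by (subst sum.atMost_Suc_shift) simp
  finally show ?thesis
    by (subst sum.atMost_Suc_shift) (simp add: sum.distrib algebra_simps)
qed

lemma dfall_add:
  "dfall l m (x + y) = (\<Sum>r\<le>m. real (m choose r) * (dfall l r x * dfall l (m - r) y))"
proof (induction m)
  case 0
  then show ?case by simp
next
  case (Suc m)
  have "dfall l (Suc m) (x + y)
      = (\<Sum>r\<le>m. real (m choose r) * (dfall l r x * dfall l (m - r) y)
                 * ((x - real r * l) + (y - real (m - r) * l)))"
    unfolding dfall_Suc Suc.IH sum_distrib_right
    by (intro sum.cong) (auto simp: algebra_simps)
  also have "\<dots> = (\<Sum>r\<le>m. real (m choose r) * (dfall l (Suc r) x * dfall l (m - r) y))
                + (\<Sum>r\<le>m. real (m choose r) * (dfall l r x * dfall l (Suc m - r) y))"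
    by (simp add: sum.distrib[symmetric] dfall_Suc Suc_diff_le algebra_simps)
  also have "\<dots> = (\<Sum>r\<le>Suc m. real (Suc m choose r) * (dfall l r x * dfall l (Suc m - r) y))"
    by (rule sum_binomial_Suc_split[symmetric])
  finally show ?case .
qed

lemma dfall_backward_difference:
  "dfall l (Suc k) x - dfall l (Suc k) (x - 1)
     = real (Suc k) * dfall l k x
       - (\<Sum>r<k. real (Suc k choose r) * (-1) ^ (Suc k - r) * drise l (Suc k - r) 1 * dfall l r x)"
proof -
  have "dfall l (Suc k) (x - 1)
      = (\<Sum>r\<le>Suc k. real (Suc k choose r) * (-1) ^ (Suc k - r) * drise l (Suc k - r) 1 * dfall l r x)"
    using dfall_add[of l "Suc k" x "-1"]
    by (simp add: dfall_at_neg_1 mult_ac)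
  also have "\<dots> = dfall l (Suc k) x - real (Suc k) * dfall l k x
      + (\<Sum>r<k. real (Suc k choose r) * (-1) ^ (Suc k - r) * drise l (Suc k - r) 1 * dfall l r x)"
    by (simp add: lessThan_Suc_atMost[symmetric] algebra_simps)
  finally show ?thesis by simp
qed

lemma Sdeg_recurrence:
  "real (Suc k) * Sdeg l k n = dfall l (Suc k) (real n)
     + (\<Sum>r<k. real (Suc k choose r) * (-1) ^ (Suc k - r) * drise l (Suc k - r) 1 * Sdeg l r n)"
proof -
  let ?c = "\<lambda>r. real (Suc k choose r) * (-1) ^ (Suc k - r) * drise l (Suc k - r) 1"
  have telescope: "(\<Sum>j=1..n. dfall l (Suc k) (real j) - dfall l (Suc k) (real j - 1))
      = dfall l (Suc k) (real n)"
    using sum_telescope''[of 0 n "\<lambda>j. dfall l (Suc k) (real j)"]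
    by (simp add: dfall_at_0 of_nat_diff)
  have "real (Suc k) * Sdeg l k n
      = (\<Sum>j=1..n. dfall l (Suc k) (real j) - dfall l (Suc k) (real j - 1)
                   + (\<Sum>r<k. ?c r * dfall l r (real j)))"
    by (simp add: Sdeg_def sum_distrib_left dfall_backward_difference)
  also have "\<dots> = dfall l (Suc k) (real n) + (\<Sum>j=1..n. \<Sum>r<k. ?c r * dfall l r (real j))"
    by (simp only: sum.distrib telescope)
  also have "\<dots> = dfall l (Suc k) (real n) + (\<Sum>r<k. ?c r * Sdeg l r n)"
    by (subst sum.swap) (simp add: Sdeg_def sum_distrib_left)
  finally show ?thesis .
qed

theorem theorem2p4:
  fixes lam :: real and n k :: nat
  assumes "n \<ge> 1" and "k \<ge> 1"
  shows "Sdeg lam k n =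
    dfall lam (k+1) (real n) / real (k+1)
    + (1 / real (k+1)) * (\<Sum>r=0..k-1. real ((k+1) choose r) * (-1) ^ (k+1-r)
          * drise lam (k+1-r) 1 * Sdeg lam r n)"
proof -
  have "{0..k-1} = {..<k}"
    using \<open>k \<ge> 1\<close> by auto
  with Sdeg_recurrence[of k lam n]
  have "real (k+1) * Sdeg lam k n = dfall lam (k+1) (real n)
      + (\<Sum>r=0..k-1. real ((k+1) choose r) * (-1) ^ (k+1-r) * drise lam (k+1-r) 1 * Sdeg lam r n)"
    by simp
  then show ?thesis
    by (simp add: nonzero_eq_divide_eq add_divide_distrib[symmetric] mult.commute del: of_nat_Suc)
qed

end
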